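(* Let $p$ be an odd prime and let $q\in\mathbb C_p$ with $|1-q|_p<p^{-1/(p-1)}$. For every $n\in\mathbb Z_+$, $$\sum_{m=0}^n\binom nm(q-1)^mE_{m,q}=\sum_{m=0}^n\sum_{k=m}^n(q-1)^k\binom nk_q s_{1,q}(k,m)E_{m,q}.$$
   Context: For $x\in\mathbb Z_p$, $[x]_q=\frac{1-q^x}{1-q}$. The fermionic $p$-adic integral of a uniformly differentiable $f:\mathbb Z_p\to\mathbb C_p$ is $\int_{\mathbb Z_p}f(x)\,d\mu_{-1}(x)=\lim_{N\to\infty}\sum_{x=0}^{p^N-1}f(x)(-1)^x$. The $q$-Euler numbers are $E_{n,q}=\int_{\mathbb Z_p}[x]_q^n\,d\mu_{-1}(x)$. $[n]_q!=[n]_q\cdots[1]_q$ ($[0]_q!=1$), $\binom nk_q=\frac{[n]_q!}{[k]_q![n-k]_q!}$. The $q$-Stirling numbers of the first kind $s_{1,q}(k,l)$ are defined by $[x]_q[x-1]_q\cdots[x-k+1]_q=q^{-\binom k2}\sum_{l=0}^k s_{1,q}(k,l)[x]_q^l$ for $k\in\mathbb Z_+$, as an identity of polynomials in $[x]_q$ (using $[x-i]_q=q^{-i}([x]_q-[i]_q)$). *)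

theory Defs
  imports Complex_Main "HOL-Computational_Algebra.Polynomial"
begin

text \<open>Abstract characterisation of C_p: a field with an absolute value nabs that is
  non-archimedean, restricts to the p-adic absolute value (nabs p = 1/p), is complete,
  algebraically closed, and in which the algebraic numbers (over Q) are dense.
  Such a field is isometrically isomorphic to C_p.\<close>
definition is_Cp :: "('a::field \<Rightarrow> real) \<Rightarrow> nat \<Rightarrow> bool" where
  "is_Cp nabs p \<longleftrightarrow>
     (\<forall>x. 0 \<le> nabs x) \<and> (\<forall>x. nabs x = 0 \<longleftrightarrow> x = 0) \<and>
     (\<forall>x y. nabs (x * y) = nabs x * nabs y) \<and>
     (\<forall>x y. nabs (x + y) \<le> max (nabs x) (nabs y)) \<and>
     nabs (of_nat p) = 1 / real p \<and>
     (\<forall>X::nat \<Rightarrow> 'a. (\<forall>e>0. \<exists>M. \<forall>m\<ge>M. \<forall>n\<ge>M. nabs (X m - X n) < e)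
        \<longrightarrow> (\<exists>L. (\<lambda>n. nabs (X n - L)) \<longlonglongrightarrow> 0)) \<and>
     (\<forall>P::'a poly. 1 \<le> degree P \<longrightarrow> (\<exists>x. poly P x = 0)) \<and>
     (\<forall>x. \<forall>e>0. \<exists>a. (\<exists>P::int poly. P \<noteq> 0 \<and> poly (map_poly of_int P) a = 0)
                    \<and> nabs (x - a) < e)"

definition qint :: "'a::field \<Rightarrow> nat \<Rightarrow> 'a" where
  "qint q x = (if q = 1 then of_nat x else (1 - q ^ x) / (1 - q))"

definition qfact :: "'a::field \<Rightarrow> nat \<Rightarrow> 'a" where
  "qfact q n = (\<Prod>i = 1..n. qint q i)"

definition qbinom :: "'a::field \<Rightarrow> nat \<Rightarrow> nat \<Rightarrow> 'a" where
  "qbinom q n k = qfact q n / (qfact q k * qfact q (n - k))"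

text \<open>q-Stirling numbers of the first kind: since [x-i]_q = q^(-i)([x]_q - [i]_q),
  the defining identity [x]_q...[x-k+1]_q = q^(-binom k 2) sum_l s(k,l) [x]_q^l says
  that s(k,l) is the coefficient of t^l in prod_(i<k) (t - [i]_q).\<close>
definition s1q :: "'a::field \<Rightarrow> nat \<Rightarrow> nat \<Rightarrow> 'a" where
  "s1q q k l = coeff (\<Prod>i<k. [: - qint q i, 1 :]) l"

text \<open>Fermionic p-adic integral; the limit only involves values at natural numbers.\<close>
definition fermionic_int :: "('a::field \<Rightarrow> real) \<Rightarrow> nat \<Rightarrow> (nat \<Rightarrow> 'a) \<Rightarrow> 'a" where
  "fermionic_int nabs p f =
     (THE L. (\<lambda>N. nabs ((\<Sum>x<p ^ N. f x * (-1) ^ x) - L)) \<longlonglongrightarrow> 0)"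

definition qEuler :: "('a::field \<Rightarrow> real) \<Rightarrow> nat \<Rightarrow> 'a \<Rightarrow> nat \<Rightarrow> 'a" where
  "qEuler nabs p q m = fermionic_int nabs p (\<lambda>x. qint q x ^ m)"

end

theory Submission
  imports Defs "HOL-Computational_Algebra.Primes"
begin

text \<open>Both sides compute the coefficient of t^m in (1 + (q - 1) t)^n, the right-hand side through
  Gauss's formula x^n = \<Sum>_k [n,k]_q (x - 1)(x - q)...(x - q^(k-1)) at x = 1 + (q - 1) t,
  where x - q^i = (q - 1)(t - [i]_q) brings in the q-Stirling numbers.
  Gauss's formula needs [k]_q \<noteq> 0 for k > 0, and this is where the bound on |1 - q| enters:
  if p does not divide k then |[k]_q - k| < 1 = |k|; |[p]_q| = 1/p because |1 - q|^(p-1) < 1/p;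
  and [p m]_q = [p]_q [m]_(q^p) with |1 - q^p| \<le> |1 - q| closes an induction on k.\<close>

lemma qint_eq_sum_power: "qint q x = (\<Sum>j<x. q ^ j)"
  by (simp add: qint_def sum_gp_strict)

lemma qint_add: "qint q (a + b) = qint q a + q ^ a * qint q b"
  unfolding qint_eq_sum_power by (induction b) (auto simp: algebra_simps power_add)

lemma qint_mult: "qint q (a * b) = qint q a * qint (q ^ a) b"
proof (induction b)
  case (Suc b)
  have "qint q (a * Suc b) = qint q (a * b) + q ^ (a * b) * qint q a"
    using qint_add[of q "a * b" a] by (simp add: add.commute)
  also have "\<dots> = qint q a * (qint (q ^ a) b + (q ^ a) ^ b)"
    by (simp add: Suc.IH power_mult algebra_simps)
  also have "qint (q ^ a) b + (q ^ a) ^ b = qint (q ^ a) (Suc b)"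
    by (simp add: qint_eq_sum_power)
  finally show ?case .
qed (simp add: qint_def)

lemma qint_eq_sum_choose: "qint q n = (\<Sum>i<n. of_nat (n choose Suc i) * (q - 1) ^ i)"
proof (cases "q = 1")
  case True
  then show ?thesis
    by (cases n) (simp_all add: qint_def lessThan_Suc_eq_insert_0 zero_notin_Suc_image sum.reindex)
next
  case False
  have "q ^ n = (\<Sum>i\<le>n. of_nat (n choose i) * (q - 1) ^ i)"
    using binomial_ring[of "q - 1" 1 n] by simp
  also have "\<dots> = 1 + (q - 1) * (\<Sum>i<n. of_nat (n choose Suc i) * (q - 1) ^ i)"
    by (subst sum.atMost_shift) (simp add: sum_distrib_left mult_ac)
  finally show ?thesis
    using False by (simp add: qint_def field_simps)
qed

lemma qfact_Suc: "qfact q (Suc n) = qfact q n * qint q (Suc n)"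
  by (simp add: qfact_def)

lemma qfact_nonzero: "(\<And>i. 0 < i \<Longrightarrow> qint q i \<noteq> 0) \<Longrightarrow> qfact q n \<noteq> 0"
  by (simp add: qfact_def)

lemma qbinom_0: "(\<And>i. 0 < i \<Longrightarrow> qint q i \<noteq> 0) \<Longrightarrow> qbinom q n 0 = 1"
  using qfact_nonzero by (simp add: qbinom_def qfact_def)

lemma qbinom_self: "(\<And>i. 0 < i \<Longrightarrow> qint q i \<noteq> 0) \<Longrightarrow> qbinom q n n = 1"
  using qfact_nonzero by (simp add: qbinom_def qfact_def)

lemma qbinom_Suc_Suc:
  assumes nz: "\<And>i. 0 < i \<Longrightarrow> qint q i \<noteq> 0" and "k < n"
  shows "qbinom q (Suc n) (Suc k) = qbinom q n k + q ^ Suc k * qbinom q n (Suc k)"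
proof -
  obtain r where r: "n = Suc k + r" using \<open>k < n\<close> by (metis less_imp_Suc_add add_Suc)
  have "qint q (Suc n) = qint q (Suc k) + q ^ Suc k * qint q (Suc r)"
    using qint_add[of q "Suc k" "Suc r"] r by simp
  moreover have "qfact q k \<noteq> 0" "qfact q r \<noteq> 0" "qint q (Suc k) \<noteq> 0" "qint q (Suc r) \<noteq> 0"
    using qfact_nonzero nz by auto
  ultimately show ?thesis
    using r by (simp add: qbinom_def qfact_Suc Suc_diff_le field_simps)
qed

definition qfalling_poly :: "'a::field \<Rightarrow> 'a poly \<Rightarrow> nat \<Rightarrow> 'a poly" where
  "qfalling_poly q U k = (\<Prod>i<k. U - [:q ^ i:])"

lemma qfalling_poly_Suc:
  "U * qfalling_poly q U k = qfalling_poly q U (Suc k) + smult (q ^ k) (qfalling_poly q U k)"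
  by (simp add: qfalling_poly_def algebra_simps)

theorem power_eq_sum_qbinom_qfalling_poly:
  assumes nz: "\<And>i. 0 < i \<Longrightarrow> qint q i \<noteq> 0"
  shows "U ^ n = (\<Sum>k\<le>n. smult (qbinom q n k) (qfalling_poly q U k))"
proof (induction n)
  case 0
  then show ?case by (simp add: qfalling_poly_def qbinom_0[OF nz])
next
  case (Suc n)
  \<comment> \<open>\<open>qbinom q n k\<close> is not zero for \<open>k > n\<close>, so it is cut off explicitly\<close>
  define b where "b k = (if k \<le> n then qbinom q n k else 0)" for k
  have pascal: "qbinom q (Suc n) k = (if k = 0 then 0 else b (k - 1)) + q ^ k * b k"
    if "k \<le> Suc n" for k
    using that qbinom_Suc_Suc[OF nz, of "k - 1" n]
    by (cases k) (auto simp: b_def qbinom_0[OF nz] qbinom_self[OF nz] less_Suc_eq not_less_eq_eq)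
  let ?G = "qfalling_poly q U"
  have "U ^ Suc n = (\<Sum>k\<le>n. smult (b k) (?G (Suc k))) + (\<Sum>k\<le>n. smult (q ^ k * b k) (?G k))"
    by (simp add: Suc b_def sum_distrib_left mult_smult_right qfalling_poly_Suc smult_add_right
        sum.distrib smult_smult mult.commute)
  also have "(\<Sum>k\<le>n. smult (b k) (?G (Suc k)))
      = (\<Sum>k\<le>Suc n. smult (if k = 0 then 0 else b (k - 1)) (?G k))"
    by (subst sum.atMost_Suc_shift) simp
  also have "(\<Sum>k\<le>n. smult (q ^ k * b k) (?G k)) = (\<Sum>k\<le>Suc n. smult (q ^ k * b k) (?G k))"
    by (simp add: b_def)
  finally show ?case
    by (simp add: pascal smult_add_left flip: sum.distrib del: sum.atMost_Suc)
qed

lemma coeff_linear_power: "coeff ([:1, c:] ^ n) m = of_nat (n choose m) * c ^ m"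
proof -
  have "[:1, c:] ^ n = (monom c 1 + 1) ^ n"
    by (simp add: monom_altdef one_pCons)
  also have "\<dots> = (\<Sum>k\<le>n. monom (of_nat (n choose k) * c ^ k) k)"
    by (simp add: binomial_ring monom_power of_nat_poly smult_monom flip: smult_monom)
  finally show ?thesis
    by (simp add: coeff_sum binomial_eq_0)
qed

lemma qfalling_poly_linear:
  "qfalling_poly q [:1, q - 1:] k = smult ((q - 1) ^ k) (\<Prod>i<k. [:- qint q i, 1:])"
proof (induction k)
  case (Suc k)
  have factor: "[:1, q - 1:] - [:q ^ k:] = smult (q - 1) [:- qint q k, 1:]"
    by (cases "q = 1") (auto simp: qint_def field_simps)
  have "qfalling_poly q [:1, q - 1:] (Suc k) = qfalling_poly q [:1, q - 1:] k * ([:1, q - 1:] - [:q ^ k:])"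
    by (simp add: qfalling_poly_def)
  then show ?case
    by (simp only: Suc.IH factor mult_smult_left mult_smult_right smult_smult power_Suc
        prod.lessThan_Suc)
qed (simp add: qfalling_poly_def)

lemma s1q_eq_0:
  assumes "k < m"
  shows "s1q q k m = 0"
proof -
  have "degree (\<Prod>i<k. [:- qint q i, 1 :]) \<le> k"
    using degree_prod_sum_le[of "{..<k}" "\<lambda>i. [:- qint q i, 1 :]"] by simp
  with assms show ?thesis
    unfolding s1q_def by (intro coeff_eq_0) auto
qed

theorem binomial_eq_sum_qbinom_s1q:
  assumes nz: "\<And>i. 0 < i \<Longrightarrow> qint q i \<noteq> 0"
  shows "of_nat (n choose m) * (q - 1) ^ m = (\<Sum>k = m..n. (q - 1) ^ k * qbinom q n k * s1q q k m)"
proof -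
  have "of_nat (n choose m) * (q - 1) ^ m = coeff ([:1, q - 1:] ^ n) m"
    by (simp add: coeff_linear_power)
  also have "\<dots> = (\<Sum>k\<le>n. (q - 1) ^ k * qbinom q n k * s1q q k m)"
    by (simp add: power_eq_sum_qbinom_qfalling_poly[OF nz] coeff_sum qfalling_poly_linear
        s1q_def mult_ac)
  also have "\<dots> = (\<Sum>k = m..n. (q - 1) ^ k * qbinom q n k * s1q q k m)"
    by (rule sum.mono_neutral_right) (auto simp: s1q_eq_0)
  finally show ?thesis .
qed

locale nonarch_abs =
  fixes nabs :: "'a::field \<Rightarrow> real"
  assumes nabs_nonneg: "0 \<le> nabs x"
    and nabs_eq_0_iff: "nabs x = 0 \<longleftrightarrow> x = 0"
    and nabs_mult: "nabs (x * y) = nabs x * nabs y"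
    and nabs_add_le_max: "nabs (x + y) \<le> max (nabs x) (nabs y)"
begin

lemma nabs_0 [simp]: "nabs 0 = 0"
  by (simp add: nabs_eq_0_iff)

lemma nabs_1 [simp]: "nabs 1 = 1"
  using nabs_mult[of 1 1] nabs_eq_0_iff[of 1] by simp

lemma nabs_minus [simp]: "nabs (- x) = nabs x"
proof -
  have "nabs (-1) * nabs (-1) = 1"
    using nabs_mult[of "-1" "-1"] by simp
  then have "nabs (-1) = 1"
    using nabs_nonneg[of "-1"] by (metis abs_of_nonneg abs_square_eq_1 power2_eq_square)
  then show ?thesis
    using nabs_mult[of "-1" x] by simp
qed

lemma nabs_minus_commute: "nabs (x - y) = nabs (y - x)"
  using nabs_minus[of "x - y"] by simp

lemma nabs_power: "nabs (x ^ k) = nabs x ^ k"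
  by (induction k) (auto simp: nabs_mult)

lemma nabs_of_nat_le_1: "nabs (of_nat k) \<le> 1"
proof (induction k)
  case (Suc k)
  then show ?case
    using nabs_add_le_max[of 1 "of_nat k"] by simp
qed (simp_all add: nabs_nonneg)

lemma nabs_add_eq_dominant: "nabs x < nabs y \<Longrightarrow> nabs (y + x) = nabs y"
  using nabs_add_le_max[of y x] nabs_add_le_max[of "y + x" "- x"]
  by (auto simp: max_def split: if_splits)

lemma nabs_sum_less:
  "finite A \<Longrightarrow> 0 < c \<Longrightarrow> (\<And>x. x \<in> A \<Longrightarrow> nabs (f x) < c) \<Longrightarrow> nabs (sum f A) < c"
proof (induction A rule: finite_induct)
  case (insert x A)
  then have "nabs (f x) < c" "nabs (sum f A) < c"
    by simp_all
  then show ?case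
    using nabs_add_le_max[of "f x" "sum f A"] insert.hyps by simp
qed (simp_all add: nabs_nonneg)

lemma nabs_one_minus_power_le:
  assumes "nabs (1 - q) \<le> 1"
  shows "nabs (1 - q ^ j) \<le> nabs (1 - q)"
proof (induction j)
  case (Suc j)
  have "nabs q \<le> 1"
    using nabs_add_le_max[of 1 "q - 1"] nabs_minus_commute[of q 1] assms by simp
  then have "nabs (q ^ j * (1 - q)) \<le> nabs (1 - q)"
    by (simp add: nabs_mult nabs_power nabs_nonneg mult_left_le_one_le power_le_one)
  moreover have "1 - q ^ Suc j = (1 - q ^ j) + q ^ j * (1 - q)"
    by (simp add: algebra_simps)
  ultimately show ?case
    using nabs_add_le_max[of "1 - q ^ j" "q ^ j * (1 - q)"] Suc by (simp only:)
qed (simp_all add: nabs_nonneg)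

end

definition padic_radius :: "nat \<Rightarrow> real" where
  "padic_radius p = real p powr (- 1 / (real p - 1))"

lemma padic_radius_less_1: "2 \<le> p \<Longrightarrow> padic_radius p < 1"
  by (simp add: padic_radius_def powr_less_one)

lemma padic_radius_power:
  assumes "2 \<le> p"
  shows "padic_radius p ^ (p - 1) = 1 / real p"
proof -
  have "padic_radius p ^ (p - 1) = real p powr (- 1 / (real p - 1) * real (p - 1))"
    using assms by (simp add: padic_radius_def powr_powr flip: powr_realpow)
  also have "- 1 / (real p - 1) * real (p - 1) = - 1"
    using assms by (simp add: of_nat_diff)
  finally show ?thesis
    using assms by (simp add: powr_minus divide_inverse)
qed

locale padic_abs = nonarch_abs nabs for nabs :: "'a::field \<Rightarrow> real" +
  fixes p :: nat
  assumes prime_p: "prime p"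
    and nabs_of_nat_p: "nabs (of_nat p) = 1 / real p"
begin

lemma two_le_p: "2 \<le> p"
  using prime_ge_2_nat[OF prime_p] .

lemma nabs_of_nat_coprime:
  assumes "\<not> p dvd k"
  shows "nabs (of_nat k) = 1"
proof -
  have "k \<noteq> 0" "coprime k p"
    using assms prime_imp_coprime[OF prime_p assms] by (auto simp: coprime_commute intro: Nat.gr0I)
  then obtain u v where uv: "k * u = p * v + 1"
    using bezout_nat[of k p] by auto
  have "1 = nabs (of_nat (k * u) + - of_nat (p * v) :: 'a)"
    by (simp add: uv)
  also have "\<dots> \<le> max (nabs (of_nat k * of_nat u :: 'a)) (nabs (of_nat p * of_nat v :: 'a))"
    using nabs_add_le_max[of "of_nat (k * u)" "- of_nat (p * v)"] by simp
  also have "\<dots> \<le> max (nabs (of_nat k :: 'a)) (1 / real p)"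
    using nabs_of_nat_le_1[of u] nabs_of_nat_le_1[of v] nabs_nonneg
    by (intro max.mono) (auto simp: nabs_mult nabs_of_nat_p mult_left_le mult_right_le_one_le
        divide_right_mono)
  finally show ?thesis
    using nabs_of_nat_le_1[of k] two_le_p by (auto simp: max_def split: if_splits)
qed

lemma nabs_choose_prime_term_less:
  assumes y: "nabs y < padic_radius p" and i: "Suc i < p"
  shows "nabs (of_nat (p choose Suc (Suc i)) * y ^ Suc i) < 1 / real p"
proof (cases "Suc (Suc i) = p")
  case True
  then have "nabs (of_nat (p choose Suc (Suc i)) * y ^ Suc i) = nabs y ^ (p - 1)"
    by (auto simp: nabs_mult nabs_power)
  also have "\<dots> < padic_radius p ^ (p - 1)"
    using y nabs_nonneg[of y] True by (intro power_strict_mono) auto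
  finally show ?thesis
    using padic_radius_power[OF two_le_p] by simp
next
  case False
  have "p dvd (p choose Suc (Suc i))"
    using False i prime_p by (intro dvd_choose_prime) auto
  then obtain b where b: "p choose Suc (Suc i) = p * b" ..
  have "nabs (of_nat (p choose Suc (Suc i)) :: 'a) \<le> 1 / real p"
    using nabs_of_nat_le_1[of b] nabs_nonneg[of "of_nat b"] two_le_p
    by (simp add: b nabs_mult nabs_of_nat_p divide_right_mono)
  then have "nabs (of_nat (p choose Suc (Suc i)) * y ^ Suc i) \<le> 1 / real p * nabs y ^ Suc i"
    unfolding nabs_mult nabs_power by (rule mult_right_mono) (simp add: nabs_nonneg)
  also have "\<dots> < 1 / real p"
  proof -
    have "nabs y ^ Suc i < 1"
      using y padic_radius_less_1[OF two_le_p] nabs_nonneg[of y]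
      by (subst power_less_one_iff) auto
    then show ?thesis
      using two_le_p by (simp add: divide_strict_right_mono)
  qed
  finally show ?thesis .
qed

lemma nabs_qint_prime:
  assumes "nabs (1 - q) < padic_radius p"
  shows "nabs (qint q p) = 1 / real p"
proof -
  obtain r where r: "p = Suc r"
    using two_le_p by (cases p) auto
  have "qint q p = of_nat p + (\<Sum>i<r. of_nat (p choose Suc (Suc i)) * (q - 1) ^ Suc i)"
    unfolding qint_eq_sum_choose r by (simp add: sum.lessThan_Suc_shift del: sum.lessThan_Suc)
  moreover have "nabs (of_nat (p choose Suc (Suc i)) * (q - 1) ^ Suc i) < 1 / real p" if "i < r" for i
    using nabs_choose_prime_term_less[of "q - 1" i] assms nabs_minus_commute[of q 1] that r
    by simp
  then have "nabs (\<Sum>i<r. of_nat (p choose Suc (Suc i)) * (q - 1) ^ Suc i) < nabs (of_nat p :: 'a)"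
    unfolding nabs_of_nat_p by (intro nabs_sum_less) (use two_le_p in auto)
  ultimately show ?thesis
    using nabs_add_eq_dominant nabs_of_nat_p by simp
qed

lemma nabs_qint_coprime:
  assumes "\<not> p dvd k" and "nabs (1 - q) < 1"
  shows "nabs (qint q k) = 1"
proof -
  let ?e = "\<Sum>j<k. 1 - q ^ j"
  have "qint q k = of_nat k + - ?e"
    by (simp add: qint_eq_sum_power sum_subtractf)
  moreover have "nabs (1 - q ^ j) < 1" for j
    using nabs_one_minus_power_le[of q j] assms(2) by simp
  then have "nabs (- ?e) < nabs (of_nat k :: 'a)"
    unfolding nabs_minus nabs_of_nat_coprime[OF assms(1)] by (intro nabs_sum_less) auto
  ultimately show ?thesis
    using nabs_add_eq_dominant nabs_of_nat_coprime[OF assms(1)] by metis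
qed

lemma qint_nonzero:
  assumes "nabs (1 - q) < padic_radius p" and "0 < k"
  shows "qint q k \<noteq> 0"
  using assms
proof (induction k arbitrary: q rule: less_induct)
  case (less k)
  have radius: "nabs (1 - q) < 1"
    using less.prems(1) padic_radius_less_1[OF two_le_p] by simp
  show ?case
  proof (cases "p dvd k")
    case True
    then obtain m where k: "k = p * m" ..
    have "0 < m" "m < k"
      using less.prems(2) two_le_p k by auto
    moreover have "nabs (1 - q ^ p) < padic_radius p"
      using nabs_one_minus_power_le[of q p] radius less.prems(1) by simp
    ultimately have "qint (q ^ p) m \<noteq> 0"
      using less.IH by blast
    moreover have "qint q p \<noteq> 0"
      using nabs_qint_prime[OF less.prems(1)] two_le_p by auto
    ultimately show ?thesis
      by (simp add: k qint_mult)
  next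
    case False
    then show ?thesis
      using nabs_qint_coprime[OF False radius] by auto
  qed
qed

end

lemma is_Cp_imp_padic_abs: "is_Cp nabs p \<Longrightarrow> prime p \<Longrightarrow> padic_abs nabs p"
  by (unfold_locales) (auto simp: is_Cp_def)

theorem mainTheorem2:
  fixes nabs :: "'a::field \<Rightarrow> real" and p :: nat and q :: 'a and n :: nat
  assumes "prime p" and "odd p"
    and "is_Cp nabs p"
    and "nabs (1 - q) < real p powr (- 1 / (real p - 1))"
  shows "(\<Sum>m = 0..n. of_nat (n choose m) * (q - 1) ^ m * qEuler nabs p q m)
       = (\<Sum>m = 0..n. \<Sum>k = m..n. (q - 1) ^ k * qbinom q n k * s1q q k m * qEuler nabs p q m)"
proof -
  interpret padic_abs nabs p
    using is_Cp_imp_padic_abs[OF assms(3,1)] .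
  have "qint q i \<noteq> 0" if "0 < i" for i
    using qint_nonzero that assms(4) unfolding padic_radius_def by blast
  then show ?thesis
    by (simp add: binomial_eq_sum_qbinom_s1q sum_distrib_right)
qed

end
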